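(* For $X,Y\in L^\infty$, \[ d_H(\mathbb{E}[X],\mathbb{E}[Y]) \le d_H(\mathrm{supp}\,X,\mathrm{supp}\,Y) \le \|X-Y\|_\infty, \] where $\mathrm{supp}\,X$ denotes the closed support of the law of $X$.
   Context: $\mathbb{K}$ is a local field with non-archimedean absolute value $|\cdot|$ satisfying $|x|=0 \iff x=0$, $|xy|=|x||y|$ and $|x+y|\le |x|\vee|y|$. $(\Omega,\mathcal{F},\mathbb{P})$ is a probability space; random variables equal a.s. are identified. $L^\infty$ is the space of $\mathbb{K}$-valued random variables $X$ with $\|X\|_\infty:=\operatorname{ess\,sup}|X|<\infty$. For $X\in L^\infty$, $\varepsilon(X):=\inf\{\|X-c\|_\infty : c\in\mathbb{K}\}$ and $\mathbb{E}[X]:=\{c\in\mathbb{K} : \|X-c\|_\infty=\varepsilon(X)\}$. For subsets $A,B\subseteq\mathbb{K}$, $d_H(A,B):=\sup_{a\in A}\inf_{b\in B}|a-b| \vee \sup_{b\in B}\inf_{a\in A}|b-a|$. *)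

theory Defs
  imports "HOL-Analysis.Analysis" "HOL-Probability.Probability"
begin

definition nonarch_local_field :: "('k::{field,metric_space} \<Rightarrow> real) \<Rightarrow> bool" where
  "nonarch_local_field av \<longleftrightarrow>
     (\<forall>x. av x = 0 \<longleftrightarrow> x = 0) \<and>
     (\<forall>x. av x \<ge> 0) \<and>
     (\<forall>x y. av (x * y) = av x * av y) \<and>
     (\<forall>x y. av (x + y) \<le> max (av x) (av y)) \<and>
     (\<forall>x y. dist x y = av (x - y)) \<and>
     (\<exists>x. av x \<noteq> 0 \<and> av x \<noteq> 1) \<and>
     locally_compact_space (euclidean :: 'k topology)"

definition linf :: "'a measure \<Rightarrow> ('k \<Rightarrow> real) \<Rightarrow> ('a \<Rightarrow> 'k) \<Rightarrow> ereal" where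
  "linf M av X = esssup M (\<lambda>\<omega>. ereal (av (X \<omega>)))"

definition Linf :: "'a measure \<Rightarrow> ('k::topological_space \<Rightarrow> real) \<Rightarrow> ('a \<Rightarrow> 'k) set" where
  "Linf M av = {X. X \<in> borel_measurable M \<and> linf M av X < \<infinity>}"

definition eps_dev :: "'a measure \<Rightarrow> ('k::ab_group_add \<Rightarrow> real) \<Rightarrow> ('a \<Rightarrow> 'k) \<Rightarrow> ereal" where
  "eps_dev M av X = (INF c. linf M av (\<lambda>\<omega>. X \<omega> - c))"

definition Expect :: "'a measure \<Rightarrow> ('k::ab_group_add \<Rightarrow> real) \<Rightarrow> ('a \<Rightarrow> 'k) \<Rightarrow> 'k set" where
  "Expect M av X = {c. linf M av (\<lambda>\<omega>. X \<omega> - c) = eps_dev M av X}"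

definition supp_law :: "'a measure \<Rightarrow> ('a \<Rightarrow> 'k::topological_space) \<Rightarrow> 'k set" where
  "supp_law M X = {x. \<forall>U. open U \<and> x \<in> U \<longrightarrow> emeasure (distr M borel X) U > 0}"

definition dH :: "('k::ab_group_add \<Rightarrow> real) \<Rightarrow> 'k set \<Rightarrow> 'k set \<Rightarrow> ereal" where
  "dH av A B = max (SUP a\<in>A. INF b\<in>B. ereal (av (a - b))) (SUP b\<in>B. INF a\<in>A. ereal (av (b - a)))"

end

theory Submission
  imports Defs
begin

text \<open>Closed balls of a non-archimedean local field are compact, so for measurable X the
  essential supremum of |X - c| is the supremum of |s - c| over the support S of X; hence
  E[X] is the set of Chebyshev centres of S. By the ultrametric inequality every point of S
  is such a centre, and the centres form the closed ball of radius diam S around any point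
  of S. If every point of S lies within t of the support T of Y, then diam S is at most
  max (diam T) t, so a point of E[X] either lies in E[Y] already or is within t of a point
  of T, which lies in E[Y]. The second inequality holds because every point of S is charged
  by X, while Y stays within ||X - Y|| of X almost surely.\<close>

definition sup_dist :: "'a::metric_space set \<Rightarrow> 'a \<Rightarrow> ereal" where
  "sup_dist S c = (SUP s\<in>S. ereal (dist s c))"

definition chebyshev_centers :: "'a::metric_space set \<Rightarrow> 'a set" where
  "chebyshev_centers S = {c. sup_dist S c = (INF c'. sup_dist S c')}"

definition hausdorff_excess :: "'a::metric_space set \<Rightarrow> 'a set \<Rightarrow> ereal" where
  "hausdorff_excess A B = (SUP a\<in>A. INF b\<in>B. ereal (dist a b))"

lemma dist_le_sup_dist: "s \<in> S \<Longrightarrow> ereal (dist s c) \<le> sup_dist S c"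
  unfolding sup_dist_def by (rule SUP_upper)

lemma ereal_le_if_le_all_real_above:
  fixes x y :: ereal
  assumes "\<And>t. y < ereal t \<Longrightarrow> x \<le> ereal t"
  shows "x \<le> y"
proof (rule dense_ge)
  fix t assume "y < t"
  then show "x \<le> t" using assms by (cases t) auto
qed

context
  assumes ultra: "\<And>x y z :: 'a::metric_space. dist x z \<le> max (dist x y) (dist y z)"
begin

lemma ultrametric_dist_trans:
  "ereal (dist (x::'a) y) \<le> r \<Longrightarrow> ereal (dist y z) \<le> r \<Longrightarrow> ereal (dist x z) \<le> r"
  using ultra[of x z y] by (cases r) auto

lemma sup_dist_le_of_mem:
  assumes "s0 \<in> (S :: 'a set)"
  shows "sup_dist S s0 \<le> sup_dist S c"
  unfolding sup_dist_def[of S s0]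
proof (rule SUP_least)
  fix s assume "s \<in> S"
  show "ereal (dist s s0) \<le> sup_dist S c"
  proof (rule ultrametric_dist_trans[where y = c])
    show "ereal (dist s c) \<le> sup_dist S c" "ereal (dist c s0) \<le> sup_dist S c"
      using \<open>s \<in> S\<close> assms by (simp_all add: dist_le_sup_dist dist_commute[of c])
  qed
qed

lemma INF_sup_dist_eq_of_mem: "s0 \<in> (S :: 'a set) \<Longrightarrow> (INF c. sup_dist S c) = sup_dist S s0"
  by (intro antisym INF_lower INF_greatest sup_dist_le_of_mem) auto

lemma chebyshev_centers_eq_cball:
  assumes s0: "s0 \<in> (S :: 'a set)"
  shows "chebyshev_centers S = {c. ereal (dist s0 c) \<le> sup_dist S s0}"
proof -
  have "c \<in> chebyshev_centers S \<longleftrightarrow> sup_dist S c \<le> sup_dist S s0" for c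
    using sup_dist_le_of_mem[OF s0, of c]
    by (auto simp: chebyshev_centers_def INF_sup_dist_eq_of_mem[OF s0])
  moreover have "sup_dist S c \<le> sup_dist S s0 \<longleftrightarrow> ereal (dist s0 c) \<le> sup_dist S s0" for c
  proof
    assume "sup_dist S c \<le> sup_dist S s0"
    then show "ereal (dist s0 c) \<le> sup_dist S s0"
      using dist_le_sup_dist[OF s0, of c] by simp
  next
    assume s0_c: "ereal (dist s0 c) \<le> sup_dist S s0"
    show "sup_dist S c \<le> sup_dist S s0"
      unfolding sup_dist_def[of S c]
    proof (rule SUP_least)
      fix s assume "s \<in> S"
      show "ereal (dist s c) \<le> sup_dist S s0"
        by (rule ultrametric_dist_trans[where y = s0]) (simp_all add: \<open>s \<in> S\<close> s0_c dist_le_sup_dist)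
    qed
  qed
  ultimately show ?thesis by blast
qed

lemma sup_dist_le_max:
  assumes "x \<in> (SX :: 'a set)" "y \<in> SY" "dist x y \<le> t"
    and near: "\<forall>s\<in>SX. \<exists>s'\<in>SY. dist s s' \<le> t"
  shows "sup_dist SX x \<le> max (sup_dist SY y) (ereal t)"
  unfolding sup_dist_def[of SX]
proof (rule SUP_least)
  fix s assume "s \<in> SX"
  then obtain s' where "s' \<in> SY" "dist s s' \<le> t" using near by blast
  have "ereal (dist s' x) \<le> max (sup_dist SY y) (ereal t)"
    by (rule ultrametric_dist_trans[where y = y])
      (simp_all add: \<open>s' \<in> SY\<close> assms(3) le_max_iff_disj dist_commute dist_le_sup_dist)
  then show "ereal (dist s x) \<le> max (sup_dist SY y) (ereal t)"
    by (rule ultrametric_dist_trans[where y = s', rotated]) (simp add: \<open>dist s s' \<le> t\<close> le_max_iff_disj)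
qed

lemma INF_dist_chebyshev_centers_le:
  assumes a: "a \<in> chebyshev_centers SX" and "(SX :: 'a set) \<noteq> {}"
    and near: "\<forall>x\<in>SX. \<exists>y\<in>SY. dist x y \<le> t"
  shows "(INF b\<in>chebyshev_centers SY. ereal (dist a b)) \<le> ereal t"
proof -
  obtain x0 where x0: "x0 \<in> SX" using assms(2) by blast
  then obtain y where y: "y \<in> SY" "dist x0 y \<le> t" using near by blast
  have "ereal (dist a y) \<le> max (sup_dist SY y) (ereal t)"
  proof (rule ultrametric_dist_trans[where y = x0])
    show "ereal (dist a x0) \<le> max (sup_dist SY y) (ereal t)"
      using a chebyshev_centers_eq_cball[OF x0] sup_dist_le_max[OF x0 y(1) y(2) near]
      by (auto simp: dist_commute)
    show "ereal (dist x0 y) \<le> max (sup_dist SY y) (ereal t)"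
      using y(2) by (simp add: le_max_iff_disj)
  qed
  moreover have centers_SY: "chebyshev_centers SY = {c. ereal (dist y c) \<le> sup_dist SY y}"
    by (rule chebyshev_centers_eq_cball[OF y(1)])
  moreover have "0 \<le> t" using y(2) zero_le_dist[of x0 y] by linarith
  moreover have "y \<in> chebyshev_centers SY" using centers_SY dist_le_sup_dist[OF y(1), of y] by simp
  ultimately consider "a \<in> chebyshev_centers SY" "0 \<le> t" | "y \<in> chebyshev_centers SY" "dist a y \<le> t"
    by (force simp: le_max_iff_disj dist_commute)
  then show ?thesis
    by cases (force intro: INF_lower2)+
qed

lemma hausdorff_excess_chebyshev_centers_le:
  assumes "(SX :: 'a set) \<noteq> {}"
  shows "hausdorff_excess (chebyshev_centers SX) (chebyshev_centers SY) \<le> hausdorff_excess SX SY"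
  unfolding hausdorff_excess_def[of "chebyshev_centers SX"]
proof (rule SUP_least, rule ereal_le_if_le_all_real_above)
  fix a t assume a: "a \<in> chebyshev_centers SX" and t: "hausdorff_excess SX SY < ereal t"
  have "\<exists>y\<in>SY. dist x y \<le> t" if "x \<in> SX" for x
  proof -
    have "(INF y\<in>SY. ereal (dist x y)) < ereal t"
      using that t unfolding hausdorff_excess_def by (meson SUP_upper order_le_less_trans)
    then show ?thesis by (auto simp: INF_less_iff intro: less_imp_le)
  qed
  then show "(INF b\<in>chebyshev_centers SY. ereal (dist a b)) \<le> ereal t"
    using INF_dist_chebyshev_centers_le[OF a assms] by blast
qed

end

lemma AE_le_if_esssup_le: "esssup M f \<le> c \<Longrightarrow> AE x in M. f x \<le> c"
  using esssup_AE[of f M] by eventually_elim (rule order_trans)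

lemma borel_measurable_ereal_dist_const:
  fixes X :: "'a \<Rightarrow> 'k::metric_space"
  assumes "X \<in> borel_measurable M"
  shows "(\<lambda>\<omega>. ereal (dist (X \<omega>) c)) \<in> borel_measurable M"
proof -
  have "continuous_on UNIV (\<lambda>z. ereal (dist z c))"
    by (intro continuous_on_ereal continuous_on_dist continuous_on_id continuous_on_const)
  then show ?thesis using borel_measurable_continuous_on[OF _ assms] by blast
qed

lemma supp_law_iff_AE:
  fixes X :: "'a \<Rightarrow> 'k::topological_space"
  assumes X: "X \<in> borel_measurable M"
  shows "x \<in> supp_law M X \<longleftrightarrow> (\<forall>U. open U \<longrightarrow> x \<in> U \<longrightarrow> \<not> (AE \<omega> in M. X \<omega> \<notin> U))"
proof -
  have "0 < emeasure (distr M borel X) U \<longleftrightarrow> \<not> (AE \<omega> in M. X \<omega> \<notin> U)" if "open U" for U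
  proof -
    have "emeasure (distr M borel X) U = emeasure M (X -` U \<inter> space M)"
      by (rule emeasure_distr[OF X borel_open[OF that]])
    moreover have "(AE \<omega> in M. X \<omega> \<notin> U) \<longleftrightarrow> emeasure M (X -` U \<inter> space M) = 0"
      by (rule AE_iff_measurable[OF measurable_sets[OF X borel_open[OF that]]]) auto
    ultimately show ?thesis by (simp add: zero_less_iff_neq_zero)
  qed
  then show ?thesis unfolding supp_law_def by blast
qed

lemma AE_notin_compact_if_disjoint_supp_law:
  fixes X :: "'a \<Rightarrow> 'k::topological_space"
  assumes X: "X \<in> borel_measurable M" and "compact C" and "C \<inter> supp_law M X = {}"
  shows "AE \<omega> in M. X \<omega> \<notin> C"
proof -
  have "\<forall>x\<in>C. \<exists>U. open U \<and> x \<in> U \<and> (AE \<omega> in M. X \<omega> \<notin> U)"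
    using assms(3) supp_law_iff_AE[OF X] by blast
  then obtain U where U: "\<And>x. x \<in> C \<Longrightarrow> open (U x) \<and> x \<in> U x \<and> (AE \<omega> in M. X \<omega> \<notin> U x)"
    by metis
  obtain F where F: "F \<subseteq> C" "finite F" "C \<subseteq> (\<Union>x\<in>F. U x)"
    using compactE_image[OF \<open>compact C\<close>, of C U] U by blast
  have "AE \<omega> in M. \<forall>x\<in>F. X \<omega> \<notin> U x"
    using F U by (intro AE_finite_allI) auto
  then show ?thesis by eventually_elim (use F in blast)
qed

lemma dist_le_esssup_if_mem_supp_law:
  fixes X :: "'a \<Rightarrow> 'k::metric_space"
  assumes X: "X \<in> borel_measurable M" and s: "s \<in> supp_law M X"
  shows "ereal (dist s c) \<le> esssup M (\<lambda>\<omega>. ereal (dist (X \<omega>) c))"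
proof (rule ereal_le_real)
  fix z assume "esssup M (\<lambda>\<omega>. ereal (dist (X \<omega>) c)) \<le> ereal z"
  then have bound: "AE \<omega> in M. dist (X \<omega>) c \<le> z"
    by (auto dest: AE_le_if_esssup_le)
  show "ereal (dist s c) \<le> ereal z"
  proof (rule ccontr)
    assume "\<not> ?thesis"
    then have "0 < dist s c - z" by simp
    moreover from bound have "AE \<omega> in M. X \<omega> \<notin> ball s (dist s c - z)"
    proof eventually_elim
      case (elim \<omega>)
      show ?case unfolding mem_ball using elim dist_triangle[of s c "X \<omega>"] by linarith
    qed
    ultimately show False using s supp_law_iff_AE[OF X] by (metis centre_in_ball open_ball)
  qed
qed

text \<open>Compactness of closed balls stands in for second countability: the set where
  dist x c > r is exhausted by countably many compact shells K m n.\<close>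

lemma esssup_dist_le_if_supp_law_le:
  fixes X :: "'a \<Rightarrow> 'k::metric_space"
  assumes proper: "\<And>(x::'k) r. compact (cball x r)" and X: "X \<in> borel_measurable M"
    and supp: "\<forall>s\<in>supp_law M X. dist s c \<le> r"
  shows "esssup M (\<lambda>\<omega>. ereal (dist (X \<omega>) c)) \<le> ereal r"
proof (rule esssup_I[OF borel_measurable_ereal_dist_const[OF X]])
  define K where "K m n = cball c (real m) - ball c (r + inverse (Suc n))" for m n :: nat
  have "AE \<omega> in M. X \<omega> \<notin> K m n" for m n
  proof (rule AE_notin_compact_if_disjoint_supp_law[OF X])
    show "compact (K m n)" unfolding K_def by (intro compact_diff proper open_ball)
    show "K m n \<inter> supp_law M X = {}"
    proof (rule equals0I)
      fix s assume "s \<in> K m n \<inter> supp_law M X"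
      then have "r + inverse (Suc n) \<le> dist s c" "dist s c \<le> r"
        using supp by (auto simp: K_def dist_commute)
      moreover have "0 < inverse (real (Suc n))" by simp
      ultimately show False by linarith
    qed
  qed
  then have "AE \<omega> in M. \<forall>m n. X \<omega> \<notin> K m n" by (simp add: AE_all_countable)
  then show "AE \<omega> in M. ereal (dist (X \<omega>) c) \<le> ereal r"
  proof eventually_elim
    case (elim \<omega>)
    show ?case
    proof (rule ccontr)
      assume "\<not> ?case"
      then obtain n where n: "inverse (Suc n) < dist (X \<omega>) c - r"
        using reals_Archimedean[of "dist (X \<omega>) c - r"] by auto
      obtain m where "dist (X \<omega>) c \<le> real m" using real_arch_simple by blast
      with n have "X \<omega> \<in> K m n" by (auto simp: K_def dist_commute)
      with elim show False by blast
    qed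
  qed
qed

lemma esssup_dist_eq_sup_dist_supp_law:
  fixes X :: "'a \<Rightarrow> 'k::metric_space"
  assumes proper: "\<And>(x::'k) r. compact (cball x r)" and X: "X \<in> borel_measurable M"
  shows "esssup M (\<lambda>\<omega>. ereal (dist (X \<omega>) c)) = sup_dist (supp_law M X) c"
proof (rule antisym)
  show "esssup M (\<lambda>\<omega>. ereal (dist (X \<omega>) c)) \<le> sup_dist (supp_law M X) c"
  proof (rule ereal_le_real)
    fix z assume "sup_dist (supp_law M X) c \<le> ereal z"
    then have "\<forall>s\<in>supp_law M X. dist s c \<le> z"
      using dist_le_sup_dist by (metis ereal_less_eq(3) order_trans)
    then show "esssup M (\<lambda>\<omega>. ereal (dist (X \<omega>) c)) \<le> ereal z"
      by (rule esssup_dist_le_if_supp_law_le[OF proper X])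
  qed
  show "sup_dist (supp_law M X) c \<le> esssup M (\<lambda>\<omega>. ereal (dist (X \<omega>) c))"
    unfolding sup_dist_def by (rule SUP_least) (rule dist_le_esssup_if_mem_supp_law[OF X])
qed

lemma supp_law_nonempty:
  fixes X :: "'a \<Rightarrow> 'k::metric_space"
  assumes "prob_space M" and proper: "\<And>(x::'k) r. compact (cball x r)"
    and X: "X \<in> borel_measurable M"
  shows "supp_law M X \<noteq> {}"
proof
  fix c :: 'k
  assume "supp_law M X = {}"
  then have "esssup M (\<lambda>\<omega>. ereal (dist (X \<omega>) c)) \<le> -\<infinity>"
    by (simp add: esssup_dist_eq_sup_dist_supp_law[OF proper X] sup_dist_def bot_ereal_def)
  then have "AE \<omega> in M. ereal (dist (X \<omega>) c) \<le> -\<infinity>" by (rule AE_le_if_esssup_le)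
  then have "AE \<omega> in M. False" by eventually_elim simp
  then show False using prob_space.AE_False[OF \<open>prob_space M\<close>] by simp
qed

lemma supp_law_near_if_AE_dist_le:
  fixes X Y :: "'a \<Rightarrow> 'k::metric_space"
  assumes proper: "\<And>(x::'k) r. compact (cball x r)"
    and X: "X \<in> borel_measurable M" and Y: "Y \<in> borel_measurable M"
    and close: "AE \<omega> in M. dist (X \<omega>) (Y \<omega>) \<le> z"
    and x: "x \<in> supp_law M X" and "0 < e"
  obtains y where "y \<in> supp_law M Y" "dist x y \<le> z + e"
proof -
  have "cball x (z + e) \<inter> supp_law M Y \<noteq> {}"
  proof
    assume "cball x (z + e) \<inter> supp_law M Y = {}"
    then have "AE \<omega> in M. Y \<omega> \<notin> cball x (z + e)"
      by (rule AE_notin_compact_if_disjoint_supp_law[OF Y proper])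
    with close have "AE \<omega> in M. X \<omega> \<notin> ball x e"
    proof eventually_elim
      case (elim \<omega>)
      show ?case unfolding mem_ball using elim dist_triangle[of x "Y \<omega>" "X \<omega>"] by auto
    qed
    then show False using x supp_law_iff_AE[OF X] \<open>0 < e\<close> by (metis centre_in_ball open_ball)
  qed
  with that show thesis by auto
qed

lemma hausdorff_excess_supp_law_le_esssup:
  fixes X Y :: "'a \<Rightarrow> 'k::metric_space"
  assumes proper: "\<And>(x::'k) r. compact (cball x r)"
    and X: "X \<in> borel_measurable M" and Y: "Y \<in> borel_measurable M"
  shows "hausdorff_excess (supp_law M X) (supp_law M Y)
           \<le> esssup M (\<lambda>\<omega>. ereal (dist (X \<omega>) (Y \<omega>)))"
  unfolding hausdorff_excess_def
proof (rule SUP_least, rule ereal_le_real)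
  fix x z
  assume x: "x \<in> supp_law M X" and "esssup M (\<lambda>\<omega>. ereal (dist (X \<omega>) (Y \<omega>))) \<le> ereal z"
  then have close: "AE \<omega> in M. dist (X \<omega>) (Y \<omega>) \<le> z"
    by (auto dest: AE_le_if_esssup_le)
  show "(INF y\<in>supp_law M Y. ereal (dist x y)) \<le> ereal z"
  proof (rule ereal_le_epsilon2)
    fix e :: real assume "0 < e"
    then obtain y where "y \<in> supp_law M Y" "dist x y \<le> z + e"
      by (rule supp_law_near_if_AE_dist_le[OF proper X Y close x])
    then show "(INF y\<in>supp_law M Y. ereal (dist x y)) \<le> ereal z + ereal e"
      by (metis INF_lower order_trans ereal_less_eq(3) plus_ereal.simps(1))
  qed
qed

lemma nonarch_local_field_dist:
  fixes av :: "'k::{field,metric_space} \<Rightarrow> real"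
  shows "nonarch_local_field av \<Longrightarrow> dist x y = av (x - y)"
  unfolding nonarch_local_field_def by auto

lemma nonarch_local_field_ultrametric:
  fixes av :: "'k::{field,metric_space} \<Rightarrow> real" and x y z :: 'k
  assumes A: "nonarch_local_field av"
  shows "dist x z \<le> max (dist x y) (dist y z)"
proof -
  have "av ((x - y) + (y - z)) \<le> max (av (x - y)) (av (y - z))"
    using A unfolding nonarch_local_field_def by blast
  then show ?thesis by (simp add: nonarch_local_field_dist[OF A])
qed

lemma nonarch_local_field_dist_mult:
  fixes av :: "'k::{field,metric_space} \<Rightarrow> real" and s x y :: 'k
  assumes A: "nonarch_local_field av"
  shows "dist (s * x) (s * y) = av s * dist x y"
  using A unfolding nonarch_local_field_def by (simp add: right_diff_distrib[symmetric])

lemma nonarch_local_field_abs_power: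
  fixes av :: "'k::{field,metric_space} \<Rightarrow> real" and t :: 'k
  assumes A: "nonarch_local_field av"
  shows "av (t ^ n) = av t ^ n"
proof -
  have mult: "av (x * y) = av x * av y" for x y using A unfolding nonarch_local_field_def by blast
  have "av 1 = 1" using mult[of 1 1] A unfolding nonarch_local_field_def by force
  then show ?thesis by (induction n) (simp_all add: mult)
qed

lemma nonarch_local_field_exists_abs_gt_1:
  fixes av :: "'k::{field,metric_space} \<Rightarrow> real"
  assumes A: "nonarch_local_field av"
  obtains t where "1 < av t"
proof -
  obtain w where w: "av w \<noteq> 0" "av w \<noteq> 1" "0 \<le> av w"
    using A unfolding nonarch_local_field_def by blast
  then have "w \<noteq> 0" using A unfolding nonarch_local_field_def by auto
  have mult: "av (x * y) = av x * av y" for x y using A unfolding nonarch_local_field_def by blast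
  have "av w * av (inverse w) = 1"
    using mult[of w "inverse w"] nonarch_local_field_abs_power[OF A, of w 0] \<open>w \<noteq> 0\<close> by simp
  then have inv: "inverse (av w) = av (inverse w)" by (rule inverse_unique)
  show thesis
  proof (cases "1 < av w")
    case True
    with that show thesis .
  next
    case False
    with w have "0 < av w" "av w < 1" by auto
    then have "1 < av (inverse w)" unfolding inv[symmetric] by (rule one_less_inverse)
    with that show thesis .
  qed
qed

lemma nonarch_local_field_exists_compact_cball_zero:
  fixes av :: "'k::{field,metric_space} \<Rightarrow> real"
  assumes A: "nonarch_local_field av"
  obtains e where "0 < e" "compact (cball (0::'k) e)"
proof -
  have "locally_compact_space (euclidean :: 'k topology)"
    using A unfolding nonarch_local_field_def by blast
  then obtain U K where UK: "open U" "compact K" "(0::'k) \<in> U" "U \<subseteq> K"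
    unfolding locally_compact_space_def by (metis UNIV_I open_openin topspace_euclidean compactin_euclidean_iff)
  then obtain e where e: "0 < e" "ball 0 e \<subseteq> U" by (meson open_contains_ball)
  have "cball (0::'k) (e/2) \<subseteq> K" using e UK(4) by (auto simp: subset_iff)
  then have "compact (cball (0::'k) (e/2))"
    using UK(2) by (metis closed_cball compact_Int_closed inf.absorb_iff2)
  then show thesis using that[of "e/2"] e(1) by simp
qed

text \<open>Local compactness gives one compact ball around 0; multiplying by a large
  power of an element of absolute value > 1 blows it up over any given ball.\<close>

lemma nonarch_local_field_compact_cball:
  fixes av :: "'k::{field,metric_space} \<Rightarrow> real"
  assumes A: "nonarch_local_field av"
  shows "compact (cball (x::'k) r)"
proof -
  obtain e where e: "0 < e" "compact (cball (0::'k) e)"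
    using nonarch_local_field_exists_compact_cball_zero[OF A] .
  obtain t where t: "1 < av t" using nonarch_local_field_exists_abs_gt_1[OF A] .
  obtain n where n: "(r + av x) / e < av t ^ n" using real_arch_pow[OF t] by blast
  define s where "s = t ^ n"
  have "av s = av t ^ n" unfolding s_def by (rule nonarch_local_field_abs_power[OF A])
  with n e(1) t have large: "r + av x < av s * e" and "0 < av s"
    by (simp_all add: field_simps)
  then have "s \<noteq> 0" using A unfolding nonarch_local_field_def by (metis less_irrefl)
  have "(av s)-lipschitz_on (cball 0 e) ((*) s)"
    by (rule lipschitz_onI) (use \<open>0 < av s\<close> in \<open>simp_all add: nonarch_local_field_dist_mult[OF A]\<close>)
  then have image: "compact ((*) s ` cball 0 e)"
    by (intro compact_continuous_image lipschitz_on_continuous_on e(2))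
  have "cball x r \<subseteq> (*) s ` cball 0 e"
  proof
    fix y assume "y \<in> cball x r"
    then have "dist y 0 \<le> r + dist x 0" using dist_triangle[of y 0 x] by (simp add: dist_commute)
    then have "dist y 0 \<le> r + av x" by (simp add: nonarch_local_field_dist[OF A])
    also have "\<dots> < av s * e" by (rule large)
    finally have "av s * dist (y / s) 0 < av s * e"
      using \<open>s \<noteq> 0\<close> nonarch_local_field_dist_mult[OF A, of s "y / s" 0] by simp
    then have "y / s \<in> cball 0 e" using \<open>0 < av s\<close> by (simp add: dist_commute)
    moreover have "y = s * (y / s)" using \<open>s \<noteq> 0\<close> by simp
    ultimately show "y \<in> (*) s ` cball 0 e" by blast
  qed
  then show ?thesis using image by (metis closed_cball compact_Int_closed inf.absorb_iff2)
qed

lemma dH_eq_max_hausdorff_excess: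
  fixes av :: "'k::{field,metric_space} \<Rightarrow> real"
  assumes "nonarch_local_field av"
  shows "dH av A B = max (hausdorff_excess A B) (hausdorff_excess B A)"
  by (simp add: dH_def hausdorff_excess_def nonarch_local_field_dist[OF assms])

lemma linf_diff_eq_esssup_dist:
  fixes av :: "'k::{field,metric_space} \<Rightarrow> real"
  assumes "nonarch_local_field av"
  shows "linf M av (\<lambda>\<omega>. X \<omega> - Y \<omega>) = esssup M (\<lambda>\<omega>. ereal (dist (X \<omega>) (Y \<omega>)))"
  by (simp add: linf_def nonarch_local_field_dist[OF assms])

lemma Expect_eq_chebyshev_centers_supp_law:
  fixes av :: "'k::{field,metric_space} \<Rightarrow> real"
  assumes A: "nonarch_local_field av" and X: "X \<in> borel_measurable M"
  shows "Expect M av X = chebyshev_centers (supp_law M X)"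
proof -
  have "linf M av (\<lambda>\<omega>. X \<omega> - c) = sup_dist (supp_law M X) c" for c
    using linf_diff_eq_esssup_dist[OF A, of M X "\<lambda>_. c"]
      esssup_dist_eq_sup_dist_supp_law[OF nonarch_local_field_compact_cball[OF A] X]
    by simp
  then show ?thesis unfolding Expect_def eps_dev_def chebyshev_centers_def by simp
qed

theorem mainTheorem3:
  fixes M :: "'a measure" and av :: "'k::{field,metric_space} \<Rightarrow> real"
    and X Y :: "'a \<Rightarrow> 'k"
  assumes "nonarch_local_field av"
    and "prob_space M"
    and "X \<in> Linf M av" and "Y \<in> Linf M av"
  shows "dH av (Expect M av X) (Expect M av Y) \<le> dH av (supp_law M X) (supp_law M Y)
       \<and> dH av (supp_law M X) (supp_law M Y) \<le> linf M av (\<lambda>\<omega>. X \<omega> - Y \<omega>)"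
proof -
  note A = assms(1)
  have X: "X \<in> borel_measurable M" and Y: "Y \<in> borel_measurable M"
    using assms(3,4) unfolding Linf_def by auto
  have proper: "\<And>(x::'k) r. compact (cball x r)"
    by (rule nonarch_local_field_compact_cball[OF A])
  note ultra = nonarch_local_field_ultrametric[OF A]
  have SX: "supp_law M X \<noteq> {}" and SY: "supp_law M Y \<noteq> {}"
    using supp_law_nonempty[OF assms(2) proper] X Y by auto
  have "dH av (Expect M av X) (Expect M av Y) \<le> dH av (supp_law M X) (supp_law M Y)"
    unfolding dH_eq_max_hausdorff_excess[OF A] Expect_eq_chebyshev_centers_supp_law[OF A X]
      Expect_eq_chebyshev_centers_supp_law[OF A Y]
    using hausdorff_excess_chebyshev_centers_le[OF ultra SX]
      hausdorff_excess_chebyshev_centers_le[OF ultra SY]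
    by (rule max.mono)
  moreover have "dH av (supp_law M X) (supp_law M Y) \<le> linf M av (\<lambda>\<omega>. X \<omega> - Y \<omega>)"
    unfolding dH_eq_max_hausdorff_excess[OF A] linf_diff_eq_esssup_dist[OF A]
    using hausdorff_excess_supp_law_le_esssup[OF proper X Y]
      hausdorff_excess_supp_law_le_esssup[OF proper Y X]
    by (simp add: dist_commute)
  ultimately show ?thesis ..
qed

end
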